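(* Let $\pi=(\pi_n^{n+1}\colon(X_{n+1},f_{n+1})\to(X_n,f_n))_{n\ge1}$ be an inverse sequence of equivariant maps and let $(X,f)=\lim_\pi(X_n,f_n)$. Let $\mathcal{C}_\pi=\{(C_n)_{n\ge1}\in\prod_{n\ge1}\mathcal{C}(f_n):\pi_n^{n+1}(C_{n+1})\subset C_n\ \forall n\ge1\}$ and, for $C_\ast=(C_n)_{n\ge1}\in\mathcal{C}_\pi$, $[C_\ast]=\{x=(x_n)_{n\ge1}\in X:x_n\in C_n\ \forall n\ge1\}$. Then $\mathcal{C}(f)=\{[C_\ast]:C_\ast\in\mathcal{C}_\pi\}$.
   Context: Each $X_n$ is a compact metric space, $f_n$ a continuous self-map, $\pi_n^{n+1}\colon X_{n+1}\to X_n$ continuous with $f_n\circ\pi_n^{n+1}=\pi_n^{n+1}\circ f_{n+1}$. $X=\{(x_n)\in\prod_n X_n:\pi_n^{n+1}(x_{n+1})=x_n\ \forall n\}$ with the product topology and $f((x_n))=(f_n(x_n))$. For a continuous map $g$ of a compact metric space $(Y,d)$: a $\delta$-chain is a finite sequence $(y_i)_{i=0}^k$, $k>0$, with $d(g(y_i),y_{i+1})\le\delta$; write $y\to_{g,\delta}z$ if one exists from $y$ to $z$; $CR(g)=\{y:y\to_{g,\delta}y\ \forall\delta>0\}$; for $y,z\in CR(g)$, $y\leftrightarrow_g z$ iff $y\to_{g,\delta}z$ and $z\to_{g,\delta}y$ for all $\delta>0$; the equivalence classes of $\leftrightarrow_g$ are the chain components, and $\mathcal{C}(g)$ is the set of chain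 components. *)

theory Defs
  imports "HOL-Analysis.Analysis"
begin

definition chain_to :: "('b \<Rightarrow> 'b \<Rightarrow> real) \<Rightarrow> 'b set \<Rightarrow> ('b \<Rightarrow> 'b) \<Rightarrow> real \<Rightarrow> 'b \<Rightarrow> 'b \<Rightarrow> bool" where
  "chain_to d Y g \<delta> y z \<longleftrightarrow>
     (\<exists>k::nat. k > 0 \<and> (\<exists>s::nat \<Rightarrow> 'b. s 0 = y \<and> s k = z \<and> (\<forall>i\<le>k. s i \<in> Y)
        \<and> (\<forall>i<k. d (g (s i)) (s (Suc i)) \<le> \<delta>)))"

definition chain_recurrent :: "('b \<Rightarrow> 'b \<Rightarrow> real) \<Rightarrow> 'b set \<Rightarrow> ('b \<Rightarrow> 'b) \<Rightarrow> 'b set" where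
  "chain_recurrent d Y g = {y \<in> Y. \<forall>\<delta>>0. chain_to d Y g \<delta> y y}"

definition chain_equiv :: "('b \<Rightarrow> 'b \<Rightarrow> real) \<Rightarrow> 'b set \<Rightarrow> ('b \<Rightarrow> 'b) \<Rightarrow> 'b \<Rightarrow> 'b \<Rightarrow> bool" where
  "chain_equiv d Y g y z \<longleftrightarrow> y \<in> chain_recurrent d Y g \<and> z \<in> chain_recurrent d Y g \<and>
     (\<forall>\<delta>>0. chain_to d Y g \<delta> y z \<and> chain_to d Y g \<delta> z y)"

definition chain_components :: "('b \<Rightarrow> 'b \<Rightarrow> real) \<Rightarrow> 'b set \<Rightarrow> ('b \<Rightarrow> 'b) \<Rightarrow> 'b set set" where
  "chain_components d Y g = {{z. chain_equiv d Y g y z} | y. y \<in> chain_recurrent d Y g}"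

definition inv_limit :: "(nat \<Rightarrow> 'a set) \<Rightarrow> (nat \<Rightarrow> 'a \<Rightarrow> 'a) \<Rightarrow> (nat \<Rightarrow> 'a) set" where
  "inv_limit X p = {x. (\<forall>n. x n \<in> X n) \<and> (\<forall>n. p n (x (Suc n)) = x n)}"

text \<open>Standard metric inducing the product topology on sequences.\<close>

definition prod_dist :: "(nat \<Rightarrow> 'a::metric_space) \<Rightarrow> (nat \<Rightarrow> 'a) \<Rightarrow> real" where
  "prod_dist x y = (\<Sum>n. min 1 (dist (x n) (y n)) / 2 ^ Suc n)"

definition induced_map :: "(nat \<Rightarrow> 'a \<Rightarrow> 'a) \<Rightarrow> (nat \<Rightarrow> 'a) \<Rightarrow> (nat \<Rightarrow> 'a)" where
  "induced_map f x = (\<lambda>n. f n (x n))"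

definition compatible_components ::
  "(nat \<Rightarrow> 'a::metric_space set) \<Rightarrow> (nat \<Rightarrow> 'a \<Rightarrow> 'a) \<Rightarrow> (nat \<Rightarrow> 'a \<Rightarrow> 'a) \<Rightarrow> (nat \<Rightarrow> 'a set) set" where
  "compatible_components X f p =
     {C. (\<forall>n. C n \<in> chain_components dist (X n) (f n)) \<and> (\<forall>n. p n ` C (Suc n) \<subseteq> C n)}"

definition thread_set :: "(nat \<Rightarrow> 'a set) \<Rightarrow> (nat \<Rightarrow> 'a \<Rightarrow> 'a) \<Rightarrow> (nat \<Rightarrow> 'a set) \<Rightarrow> (nat \<Rightarrow> 'a) set" where
  "thread_set X p C = {x \<in> inv_limit X p. \<forall>n. x n \<in> C n}"

end

theory Submission
  imports Defs
begin

(* Up to an error 2^-N, prod_dist is controlled by the first N coordinates, and on a thread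
   these are determined by the N-th one through the bonding maps. Hence a delta-chain of
   threads projects to small chains in every X n. Conversely, by compactness the bonding maps
   send a deep enough level X M close to the N-th coordinates of threads, so a fine chain in
   X M, pushed down to X N, is shadowed by a chain of threads. Consequently chain recurrence and
   chain equivalence in the limit are tested coordinatewise, and every compatible family of
   chain components carries a thread because chain components are closed, hence compact. *)

lemma chain_to_trans:
  assumes "chain_to d Y g \<delta> a b" "chain_to d Y g \<delta> b c"
  shows "chain_to d Y g \<delta> a c"
proof -
  obtain k s where k: "k > 0" "s 0 = a" "s k = b" "\<forall>i\<le>k. s i \<in> Y"
    "\<forall>i<k. d (g (s i)) (s (Suc i)) \<le> \<delta>"
    using assms(1) unfolding chain_to_def by blast
  obtain l t where l: "l > 0" "t 0 = b" "t l = c" "\<forall>i\<le>l. t i \<in> Y"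
    "\<forall>i<l. d (g (t i)) (t (Suc i)) \<le> \<delta>"
    using assms(2) unfolding chain_to_def by blast
  define u where "u i = (if i \<le> k then s i else t (i - k))" for i
  have "d (g (u i)) (u (Suc i)) \<le> \<delta>" if "i < k + l" for i
  proof (cases "i < k")
    case False
    then have "Suc i - k = Suc (i - k)" by simp
    then show ?thesis using False that k l by (cases "i = k") (auto simp: u_def)
  qed (use k in \<open>simp add: u_def\<close>)
  moreover have "u 0 = a" "u (k + l) = c" "\<forall>i\<le>k+l. u i \<in> Y"
    using k l by (auto simp: u_def)
  ultimately show ?thesis
    unfolding chain_to_def using k(1) by (intro exI[of _ "k + l"] conjI exI[of _ u]) auto
qed

lemma chain_equiv_sym: "chain_equiv d Y g a b \<Longrightarrow> chain_equiv d Y g b a"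
  unfolding chain_equiv_def by blast

lemma chain_equiv_trans:
  "chain_equiv d Y g a b \<Longrightarrow> chain_equiv d Y g b c \<Longrightarrow> chain_equiv d Y g a c"
  unfolding chain_equiv_def using chain_to_trans by metis

lemma chain_equiv_refl: "a \<in> chain_recurrent d Y g \<Longrightarrow> chain_equiv d Y g a a"
  unfolding chain_equiv_def chain_recurrent_def by blast

lemma chain_component_eq:
  assumes "C \<in> chain_components d Y g" "c \<in> C"
  shows "C = {z. chain_equiv d Y g c z}"
  using assms unfolding chain_components_def by (blast intro: chain_equiv_sym chain_equiv_trans)

lemma chain_components_nonempty: "C \<in> chain_components d Y g \<Longrightarrow> C \<noteq> {}"
  unfolding chain_components_def by (blast intro: chain_equiv_refl)

lemma chain_components_subset: "C \<in> chain_components d Y g \<Longrightarrow> C \<subseteq> chain_recurrent d Y g"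
  unfolding chain_components_def chain_equiv_def by blast

lemma chain_to_move_end:
  fixes g :: "'a::metric_space \<Rightarrow> 'a"
  assumes "chain_to dist Y g \<delta> a b" "z \<in> Y" "dist b z \<le> \<eta>"
  shows "chain_to dist Y g (\<delta> + \<eta>) a z"
proof -
  obtain k s where k: "k > 0" "s 0 = a" "s k = b" "\<forall>i\<le>k. s i \<in> Y"
    "\<forall>i<k. dist (g (s i)) (s (Suc i)) \<le> \<delta>"
    using assms(1) unfolding chain_to_def by blast
  have "\<eta> \<ge> 0" using assms(3) zero_le_dist order_trans by blast
  define u where "u = s(k := z)"
  have "dist (g (u i)) (u (Suc i)) \<le> \<delta> + \<eta>" if "i < k" for i
  proof (cases "Suc i = k")
    case True
    then have "dist (g (s i)) b \<le> \<delta>" using that k(3,5) by metis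
    moreover have "dist (g (s i)) z \<le> dist (g (s i)) b + dist b z" by (rule dist_triangle)
    ultimately show ?thesis using True that assms(3) by (simp add: u_def)
  next
    case False
    then show ?thesis using that k(5) \<open>\<eta> \<ge> 0\<close> by (simp add: u_def add_increasing2)
  qed
  then show ?thesis unfolding chain_to_def using k assms(2)
    by (intro exI[of _ k] conjI exI[of _ u]) (auto simp: u_def)
qed

lemma chain_to_move_start:
  fixes g :: "'a::metric_space \<Rightarrow> 'a"
  assumes "chain_to dist Y g \<delta> b c" "z \<in> Y" "dist (g z) (g b) \<le> \<eta>"
  shows "chain_to dist Y g (\<delta> + \<eta>) z c"
proof -
  obtain k s where k: "k > 0" "s 0 = b" "s k = c" "\<forall>i\<le>k. s i \<in> Y"
    "\<forall>i<k. dist (g (s i)) (s (Suc i)) \<le> \<delta>"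
    using assms(1) unfolding chain_to_def by blast
  have "\<eta> \<ge> 0" using assms(3) zero_le_dist order_trans by blast
  define u where "u = s(0 := z)"
  have "dist (g (u i)) (u (Suc i)) \<le> \<delta> + \<eta>" if "i < k" for i
  proof (cases "i = 0")
    case True
    then have "dist (g b) (s 1) \<le> \<delta>" using that k(2,5) by (metis One_nat_def)
    moreover have "dist (g z) (s 1) \<le> dist (g z) (g b) + dist (g b) (s 1)" by (rule dist_triangle)
    ultimately show ?thesis using True assms(3) by (simp add: u_def)
  next
    case False
    then show ?thesis using that k(5) \<open>\<eta> \<ge> 0\<close> by (simp add: u_def add_increasing2)
  qed
  then show ?thesis unfolding chain_to_def using k assms(2)
    by (intro exI[of _ k] conjI exI[of _ u]) (auto simp: u_def)
qed

lemma chain_equiv_limit: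
  fixes g :: "'a::metric_space \<Rightarrow> 'a"
  assumes "closed Y" "continuous_on Y g"
    and equiv: "\<And>m. chain_equiv dist Y g a (z m)" and lim: "z \<longlonglongrightarrow> l"
  shows "chain_equiv dist Y g a l"
proof -
  have zY: "z m \<in> Y" for m
    using equiv[of m] unfolding chain_equiv_def chain_recurrent_def by blast
  then have lY: "l \<in> Y" using assms(1) lim closed_sequentially by blast
  have both: "chain_to dist Y g \<delta> a l \<and> chain_to dist Y g \<delta> l a" if "\<delta> > 0" for \<delta>
  proof -
    obtain \<sigma> where "\<sigma> > 0" and \<sigma>: "\<forall>y\<in>Y. dist y l < \<sigma> \<longrightarrow> dist (g y) (g l) < \<delta>/2"
      using assms(2) lY \<open>\<delta> > 0\<close> unfolding continuous_on_iff by (meson half_gt_zero)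
    have "min \<sigma> (\<delta>/2) > 0" using \<open>\<delta> > 0\<close> \<open>\<sigma> > 0\<close> by simp
    then obtain M where "\<forall>m\<ge>M. dist (z m) l < min \<sigma> (\<delta>/2)"
      using lim unfolding lim_sequentially by blast
    then have m: "dist (z M) l < min \<sigma> (\<delta>/2)" by simp
    have a_to_z: "chain_to dist Y g (\<delta>/2) a (z M)" and z_to_a: "chain_to dist Y g (\<delta>/2) (z M) a"
      using equiv[of M] \<open>\<delta> > 0\<close> unfolding chain_equiv_def by auto
    moreover have "dist (z M) l \<le> \<delta>/2" "dist (g l) (g (z M)) \<le> \<delta>/2"
      using m \<sigma> zY[of M] by (auto simp: dist_commute)
    ultimately have "chain_to dist Y g (\<delta>/2 + \<delta>/2) a l" "chain_to dist Y g (\<delta>/2 + \<delta>/2) l a"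
      using chain_to_move_end[OF a_to_z lY] chain_to_move_start[OF z_to_a lY] by blast+
    then show ?thesis by simp
  qed
  have "chain_to dist Y g \<delta> l l" if "\<delta> > 0" for \<delta>
    using both[OF that] chain_to_trans[of dist Y g \<delta> l a l] by blast
  then have "l \<in> chain_recurrent dist Y g" using lY by (simp add: chain_recurrent_def)
  then show ?thesis using equiv[of 0] both by (auto simp: chain_equiv_def)
qed

lemma closed_chain_component:
  fixes g :: "'a::metric_space \<Rightarrow> 'a"
  assumes "closed Y" "continuous_on Y g" "C \<in> chain_components dist Y g"
  shows "closed C"
proof -
  obtain y where C: "C = {z. chain_equiv dist Y g y z}"
    using assms(3) unfolding chain_components_def by blast
  show ?thesis
    unfolding C closed_sequential_limits by (auto intro: chain_equiv_limit[OF assms(1,2)])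
qed

lemma chain_to_image:
  fixes h :: "'a::metric_space \<Rightarrow> 'b::metric_space"
  assumes "uniformly_continuous_on Y h" "h ` Y \<subseteq> Z" "g ` Y \<subseteq> Y"
    and "\<And>y. y \<in> Y \<Longrightarrow> g' (h y) = h (g y)"
    and "\<And>\<epsilon>. \<epsilon> > 0 \<Longrightarrow> chain_to dist Y g \<epsilon> a b" "\<eta> > 0"
  shows "chain_to dist Z g' \<eta> (h a) (h b)"
proof -
  obtain \<sigma> where "\<sigma> > 0" and \<sigma>: "\<forall>y\<in>Y. \<forall>y'\<in>Y. dist y' y < \<sigma> \<longrightarrow> dist (h y') (h y) < \<eta>"
    using assms(1,6) unfolding uniformly_continuous_on_def by blast
  then obtain k s where k: "k > 0" "s 0 = a" "s k = b" "\<forall>i\<le>k. s i \<in> Y"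
    "\<forall>i<k. dist (g (s i)) (s (Suc i)) \<le> \<sigma>/2"
    using assms(5)[of "\<sigma>/2"] unfolding chain_to_def by auto
  have "dist (g' (h (s i))) (h (s (Suc i))) \<le> \<eta>" if "i < k" for i
  proof -
    have "s i \<in> Y" "s (Suc i) \<in> Y" "g (s i) \<in> Y" using k(4) that assms(3) by auto
    moreover have "dist (g (s i)) (s (Suc i)) < \<sigma>" using k(5) that \<open>\<sigma> > 0\<close> by force
    ultimately show ?thesis using \<sigma> assms(4) by (simp add: less_imp_le)
  qed
  then show ?thesis unfolding chain_to_def using k assms(2)
    by (intro exI[of _ k] conjI exI[of _ "h \<circ> s"]) auto
qed

lemma chain_equiv_image:
  fixes h :: "'a::metric_space \<Rightarrow> 'b::metric_space"
  assumes "uniformly_continuous_on Y h" "h ` Y \<subseteq> Z" "g ` Y \<subseteq> Y"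
    and "\<And>y. y \<in> Y \<Longrightarrow> g' (h y) = h (g y)" "chain_equiv dist Y g a b"
  shows "chain_equiv dist Z g' (h a) (h b)"
  using assms(5) chain_to_image[OF assms(1-4)] assms(2)
  unfolding chain_equiv_def chain_recurrent_def by (auto simp: image_subset_iff)

lemma uniformly_continuous_on_finite_family:
  fixes h :: "'i \<Rightarrow> 'a::metric_space \<Rightarrow> 'b::metric_space"
  assumes "finite I" "\<And>i. i \<in> I \<Longrightarrow> uniformly_continuous_on S (h i)" "\<epsilon> > 0"
  shows "\<exists>\<eta>>0. \<forall>i\<in>I. \<forall>a\<in>S. \<forall>b\<in>S. dist a b < \<eta> \<longrightarrow> dist (h i a) (h i b) < \<epsilon>"
proof -
  have "\<forall>i\<in>I. eventually (\<lambda>(a, b). a \<in> S \<longrightarrow> b \<in> S \<longrightarrow> dist (h i a) (h i b) < \<epsilon>) uniformity"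
    using assms(2,3) unfolding eventually_uniformity_metric uniformly_continuous_on_def by fast
  then have "eventually (\<lambda>ab. \<forall>i\<in>I. case ab of (a, b) \<Rightarrow>
      a \<in> S \<longrightarrow> b \<in> S \<longrightarrow> dist (h i a) (h i b) < \<epsilon>) uniformity"
    by (rule eventually_ball_finite[OF assms(1)])
  then show ?thesis unfolding eventually_uniformity_metric by auto
qed

lemma prod_dist_summable:
  fixes u v :: "nat \<Rightarrow> 'a::metric_space"
  shows "summable (\<lambda>n. min 1 (dist (u n) (v n)) / 2 ^ Suc n)"
proof (rule summable_comparison_test)
  show "\<exists>N. \<forall>n\<ge>N. norm (min 1 (dist (u n) (v n)) / 2 ^ Suc n) \<le> (1/2) ^ n"
    by (auto simp: divide_simps)
  show "summable (\<lambda>n. (1/2::real) ^ n)" by (rule summable_geometric) simp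
qed

lemma dist_le_prod_dist:
  fixes u v :: "nat \<Rightarrow> 'a::metric_space"
  assumes "prod_dist u v < (1/2) ^ Suc n"
  shows "dist (u n) (v n) \<le> 2 ^ Suc n * prod_dist u v"
proof -
  have "min 1 (dist (u n) (v n)) / 2 ^ Suc n \<le> prod_dist u v"
    using sum_le_suminf[OF prod_dist_summable, of "{n}"] unfolding prod_dist_def by simp
  with assms have "dist (u n) (v n) < 1 \<and> dist (u n) (v n) / 2 ^ Suc n \<le> prod_dist u v"
    by (auto simp: min_def power_one_over split: if_splits)
  then show ?thesis by (simp add: divide_simps mult.commute)
qed

lemma prod_dist_le:
  fixes u v :: "nat \<Rightarrow> 'a::metric_space"
  shows "prod_dist u v \<le> (\<Sum>n<N. dist (u n) (v n)) + (1/2) ^ N"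
proof -
  let ?t = "\<lambda>n. min 1 (dist (u n) (v n)) / 2 ^ Suc n"
  have "prod_dist u v = (\<Sum>n. ?t (n + N)) + (\<Sum>n<N. ?t n)"
    unfolding prod_dist_def by (rule suminf_split_initial_segment[OF prod_dist_summable])
  moreover have "(\<Sum>n<N. ?t n) \<le> (\<Sum>n<N. dist (u n) (v n))"
  proof (rule sum_mono)
    fix n
    have "(1::real) \<le> 2 ^ Suc n" by (rule one_le_power) simp
    then have "?t n \<le> min 1 (dist (u n) (v n))"
      by (simp add: divide_le_eq mult_le_cancel_left1 min_le_iff_disj)
    then show "?t n \<le> dist (u n) (v n)" by linarith
  qed
  moreover have "(\<Sum>n. ?t (n + N)) \<le> (\<Sum>n. (1/2) ^ N * (1/2) ^ Suc n)"
  proof (rule suminf_le)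
    show "?t (n + N) \<le> (1/2) ^ N * (1/2) ^ Suc n" for n
      by (auto simp: divide_simps power_add)
    show "summable (\<lambda>n. ?t (n + N))"
      using prod_dist_summable[of u v] by (rule summable_ignore_initial_segment)
    show "summable (\<lambda>n. (1/2::real) ^ N * (1/2) ^ Suc n)"
      by (simp add: summable_geometric)
  qed
  moreover have "(\<Sum>n. (1/2::real) ^ N * (1/2) ^ Suc n) = (1/2) ^ N * (1/2) * (\<Sum>n. (1/2) ^ n)"
    by (subst suminf_mult[symmetric]) (auto simp: summable_geometric mult.assoc)
  moreover have "(1/2::real) ^ N * (1/2) * (\<Sum>n. (1/2) ^ n) = (1/2) ^ N"
    by (simp add: suminf_geometric)
  ultimately show ?thesis by linarith
qed

(* bond p j m is the paper's composite bonding map pi_j^m from level m down to level j;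
   it is the identity when m <= j. *)
primrec bond :: "(nat \<Rightarrow> 'a \<Rightarrow> 'a) \<Rightarrow> nat \<Rightarrow> nat \<Rightarrow> 'a \<Rightarrow> 'a" where
  "bond p j 0 = id"
| "bond p j (Suc m) = (if j \<le> m then bond p j m \<circ> p m else id)"

lemma bond_self [simp]: "bond p j j = id"
  by (cases j) auto

lemma bond_Suc_left:
  assumes "j < m"
  shows "p j (bond p (Suc j) m a) = bond p j m a"
  using assms
proof (induction m arbitrary: a)
  case (Suc m)
  then show ?case by (cases "j = m") auto
qed simp

lemma bond_in:
  assumes "\<And>n. p n ` A (Suc n) \<subseteq> A n" "j \<le> m" "a \<in> A m"
  shows "bond p j m a \<in> A j"
  using assms(2,3)
proof (induction m arbitrary: a rule: dec_induct)
  case (step n)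
  then show ?case using assms(1) by auto
qed simp

lemma bond_thread:
  assumes "x \<in> inv_limit A p" "j \<le> m"
  shows "bond p j m (x m) = x j"
  using assms(2) by (induction m rule: dec_induct) (use assms(1) in \<open>auto simp: inv_limit_def\<close>)

lemma continuous_on_bond:
  assumes "\<And>n. continuous_on (A (Suc n)) (p n)" "\<And>n. p n ` A (Suc n) \<subseteq> A n" "j \<le> m"
  shows "continuous_on (A m) (bond p j m)"
  using assms(3)
proof (induction m rule: dec_induct)
  case (step n)
  have "continuous_on (p n ` A (Suc n)) (bond p j n)"
    using step(3) assms(2)[of n] by (rule continuous_on_subset)
  then have "continuous_on (A (Suc n)) (bond p j n \<circ> p n)"
    using assms(1) by (intro continuous_on_compose)
  then show ?case using step(1) by simp
qed simp

lemma bond_commute: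
  assumes "\<And>n x. x \<in> A (Suc n) \<Longrightarrow> f n (p n x) = p n (f (Suc n) x)"
    "\<And>n. p n ` A (Suc n) \<subseteq> A n" "j \<le> m" "a \<in> A m"
  shows "f j (bond p j m a) = bond p j m (f m a)"
  using assms(3,4)
proof (induction m arbitrary: a rule: dec_induct)
  case (step n)
  then show ?case using assms(1,2) by (auto simp: image_subset_iff)
qed simp

lemma componentwise_convergent_subseq:
  fixes z :: "nat \<Rightarrow> nat \<Rightarrow> 'a::metric_space"
  assumes "\<And>j. compact (K j)" and "\<And>m j. z m j \<in> K j"
  obtains r w where "strict_mono r" "\<And>j. w j \<in> K j" "\<And>j. (\<lambda>m. z (r m) j) \<longlonglongrightarrow> w j"
proof -
  have "compact (Pi\<^sub>E UNIV K)"
    using assms(1) compactin_PiE[of "\<lambda>i. euclidean" UNIV K]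
    by (simp add: euclidean_product_topology)
  then have "seq_compact (Pi\<^sub>E UNIV K)" by (rule compact_imp_seq_compact)
  moreover have "z m \<in> Pi\<^sub>E UNIV K" for m using assms(2) by auto
  ultimately obtain w r where w: "w \<in> Pi\<^sub>E UNIV K" and r: "strict_mono r" and lim: "(z \<circ> r) \<longlonglongrightarrow> w"
    by (metis seq_compactE)
  have "(\<lambda>m. z (r m) j) \<longlonglongrightarrow> w j" for j
    using continuous_on_tendsto_compose[OF continuous_on_product_coordinates lim]
    by (simp add: o_def)
  with r w show ?thesis by (intro that[OF r]) auto
qed

lemma inv_limit_limit_of_bonds:
  fixes A :: "nat \<Rightarrow> 'a::metric_space set"
  assumes compact: "\<And>n. compact (A n)" and cont: "\<And>n. continuous_on (A (Suc n)) (p n)"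
    and maps: "\<And>n. p n ` A (Suc n) \<subseteq> A n" and a: "\<And>m. a m \<in> A m"
  obtains r w where "strict_mono r" "w \<in> inv_limit A p"
    "\<And>j. (\<lambda>m. bond p j (r m) (a (r m))) \<longlonglongrightarrow> w j"
proof -
  \<comment> \<open>the values for \<open>j > m\<close> only pad \<open>z m\<close> into \<open>\<Pi> j. A j\<close>\<close>
  define z where "z m j = (if j \<le> m then bond p j m (a m) else a j)" for m j
  have zA: "z m j \<in> A j" for m j using bond_in[of p A, OF maps] a by (simp add: z_def)
  obtain r w where r: "strict_mono r" and w: "\<And>j. w j \<in> A j"
    and lim: "\<And>j. (\<lambda>m. z (r m) j) \<longlonglongrightarrow> w j"
    using componentwise_convergent_subseq[where K = A and z = z, OF compact zA] by blast
  have large: "eventually (\<lambda>m. j \<le> r m) sequentially" for j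
    using filterlim_subseq[OF r] by (simp add: filterlim_at_top)
  have lim_bond: "(\<lambda>m. bond p j (r m) (a (r m))) \<longlonglongrightarrow> w j" for j
    by (rule Lim_transform_eventually[OF lim[of j] eventually_mono[OF large[of j]]])
      (simp add: z_def)
  have "p j (w (Suc j)) = w j" for j
  proof -
    have "(\<lambda>m. p j (z (r m) (Suc j))) \<longlonglongrightarrow> p j (w (Suc j))"
      using continuous_on_tendsto_compose[OF cont[of j] lim[of "Suc j"] w[of "Suc j"]] zA by simp
    moreover have "eventually (\<lambda>m. p j (z (r m) (Suc j)) = z (r m) j) sequentially"
      using large[of "Suc j"] by eventually_elim (simp add: z_def bond_Suc_left)
    ultimately have "(\<lambda>m. z (r m) j) \<longlonglongrightarrow> p j (w (Suc j))"
      by (rule Lim_transform_eventually)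
    then show ?thesis using lim[of j] by (rule LIMSEQ_unique)
  qed
  with w have "w \<in> inv_limit A p" by (simp add: inv_limit_def)
  from r this lim_bond show ?thesis by (rule that)
qed

lemma chain_to_coordinate:
  fixes X :: "nat \<Rightarrow> 'a::metric_space set"
  assumes "\<And>\<delta>. \<delta> > 0 \<Longrightarrow> chain_to prod_dist (inv_limit X p) (induced_map f) \<delta> x y" "\<epsilon> > 0"
  shows "chain_to dist (X n) (f n) \<epsilon> (x n) (y n)"
proof -
  define \<delta> where "\<delta> = min (\<epsilon> / 2 ^ Suc n) ((1/2) ^ Suc n / 2)"
  have "\<delta> > 0" using assms(2) by (simp add: \<delta>_def)
  then obtain k s where k: "k > 0" "s 0 = x" "s k = y" "\<forall>i\<le>k. s i \<in> inv_limit X p"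
    "\<forall>i<k. prod_dist (induced_map f (s i)) (s (Suc i)) \<le> \<delta>"
    using assms(1) unfolding chain_to_def by blast
  have "\<delta> \<le> (1/2) ^ Suc n / 2" "\<delta> \<le> \<epsilon> / 2 ^ Suc n" by (simp_all add: \<delta>_def)
  moreover have "(0::real) < (1/2) ^ Suc n" by simp
  ultimately have small: "\<delta> < (1/2) ^ Suc n" "2 ^ Suc n * \<delta> \<le> \<epsilon>"
    using mult_left_mono[of \<delta> "\<epsilon> / 2 ^ Suc n" "2 ^ Suc n"] by (linarith, simp)
  have "dist (f n (s i n)) (s (Suc i) n) \<le> \<epsilon>" if "i < k" for i
  proof -
    have "dist (induced_map f (s i) n) (s (Suc i) n) \<le>
        2 ^ Suc n * prod_dist (induced_map f (s i)) (s (Suc i))"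
      using k(5) that small(1) by (intro dist_le_prod_dist) force
    also have "\<dots> \<le> 2 ^ Suc n * \<delta>" using k(5) that by simp
    finally show ?thesis using small(2) by (simp add: induced_map_def)
  qed
  then show ?thesis unfolding chain_to_def using k
    by (intro exI[of _ k] conjI exI[of _ "\<lambda>i. s i n"]) (auto simp: inv_limit_def)
qed

locale equivariant_inverse_sequence =
  fixes X :: "nat \<Rightarrow> 'a::metric_space set"
    and f p :: "nat \<Rightarrow> 'a \<Rightarrow> 'a"
  assumes compact_X: "\<And>n. compact (X n)"
    and continuous_f: "\<And>n. continuous_on (X n) (f n)"
    and f_maps: "\<And>n. f n ` X n \<subseteq> X n"
    and continuous_p: "\<And>n. continuous_on (X (Suc n)) (p n)"
    and p_maps: "\<And>n. p n ` X (Suc n) \<subseteq> X n"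
    and f_p_commute: "\<And>n x. x \<in> X (Suc n) \<Longrightarrow> f n (p n x) = p n (f (Suc n) x)"
begin

abbreviation Xlim where "Xlim \<equiv> inv_limit X p"
abbreviation flim where "flim \<equiv> induced_map f"

lemma induced_map_in_inv_limit:
  assumes "x \<in> Xlim"
  shows "flim x \<in> Xlim"
proof -
  have x: "x n \<in> X n" "p n (x (Suc n)) = x n" for n using assms by (auto simp: inv_limit_def)
  have "f n (x n) \<in> X n" for n using f_maps x(1) by blast
  moreover have "p n (f (Suc n) (x (Suc n))) = f n (x n)" for n
    using f_p_commute[OF x(1)[of "Suc n"]] by (simp add: x(2))
  ultimately show ?thesis by (simp add: inv_limit_def induced_map_def)
qed

lemma uniformly_continuous_bond: "j \<le> m \<Longrightarrow> uniformly_continuous_on (X m) (bond p j m)"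
  using compact_uniformly_continuous[OF continuous_on_bond[of X p, OF continuous_p p_maps]
      compact_X] .

lemma prod_dist_lt_if_level_close:
  assumes "\<delta> > 0"
  shows "\<exists>N. \<exists>\<eta>>0. \<forall>u\<in>Xlim. \<forall>v\<in>Xlim. dist (u N) (v N) < \<eta> \<longrightarrow> prod_dist u v < \<delta>"
proof -
  obtain N where N: "(1/2::real) ^ N < \<delta>/2"
    using real_arch_pow_inv[of "\<delta>/2" "1/2::real"] assms by auto
  define \<theta> where "\<theta> = \<delta> / 2 / real (Suc N)"
  have "\<theta> > 0" using assms by (simp add: \<theta>_def)
  have ucont: "uniformly_continuous_on (X N) (bond p n N)" if "n \<in> {..<N}" for n
    using that by (simp add: uniformly_continuous_bond)
  obtain \<eta> where "\<eta> > 0" and \<eta>: "\<forall>n\<in>{..<N}. \<forall>a\<in>X N. \<forall>b\<in>X N.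
      dist a b < \<eta> \<longrightarrow> dist (bond p n N a) (bond p n N b) < \<theta>"
    using uniformly_continuous_on_finite_family[where I = "{..<N}" and S = "X N"
        and h = "\<lambda>n. bond p n N", OF finite_lessThan ucont \<open>\<theta> > 0\<close>]
    by blast
  have "prod_dist u v < \<delta>"
    if u: "u \<in> Xlim" and v: "v \<in> Xlim" and close: "dist (u N) (v N) < \<eta>" for u v
  proof -
    have "dist (u n) (v n) \<le> \<theta>" if "n < N" for n
    proof -
      have "u N \<in> X N" "v N \<in> X N" using u v by (simp_all add: inv_limit_def)
      then have "dist (bond p n N (u N)) (bond p n N (v N)) < \<theta>" using \<eta> close that by simp
      then show ?thesis
        using bond_thread[OF u less_imp_le[OF that]] bond_thread[OF v less_imp_le[OF that]] by simp
    qed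
    then have "(\<Sum>n<N. dist (u n) (v n)) \<le> real N * \<theta>"
      using sum_bounded_above[of "{..<N}" "\<lambda>n. dist (u n) (v n)" \<theta>] by simp
    also have "\<dots> \<le> real (Suc N) * \<theta>" using \<open>\<theta> > 0\<close> by (intro mult_right_mono) auto
    also have "\<dots> = \<delta>/2" by (simp add: \<theta>_def del: of_nat_Suc)
    finally show ?thesis using prod_dist_le[of u v N] N by linarith
  qed
  with \<open>\<eta> > 0\<close> show ?thesis by blast
qed

(* By contradiction: bad points chosen at ever deeper levels would, by
   inv_limit_limit_of_bonds, have images at level N converging to the N-th coordinate
   of a thread. *)
lemma bond_image_near_threads:
  assumes "\<rho> > 0"
  shows "\<exists>M\<ge>N. \<forall>s\<in>X M. \<exists>e\<in>Xlim. dist (bond p N M s) (e N) < \<rho>"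
proof (rule ccontr)
  assume "\<not> ?thesis"
  then have "\<forall>M. \<exists>s. N \<le> M \<longrightarrow> s \<in> X M \<and> (\<forall>e\<in>Xlim. \<not> dist (bond p N M s) (e N) < \<rho>)"
    by blast
  from choice[OF this] obtain S where S: "\<forall>M. N \<le> M \<longrightarrow>
      S M \<in> X M \<and> (\<forall>e\<in>Xlim. \<not> dist (bond p N M (S M)) (e N) < \<rho>)"
    by blast
  define a where "a m = (if N \<le> m then S m else bond p m N (S N))" for m
  have a: "a m \<in> X m" for m using S bond_in[of p X, OF p_maps] by (simp add: a_def)
  obtain r w where r: "strict_mono r" and w: "w \<in> Xlim"
    and lim: "\<And>j. (\<lambda>m. bond p j (r m) (a (r m))) \<longlonglongrightarrow> w j"
    using inv_limit_limit_of_bonds[of X p a, OF compact_X continuous_p p_maps a] by blast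
  have "eventually (\<lambda>m. N \<le> r m) sequentially"
    using filterlim_subseq[OF r] by (simp add: filterlim_at_top)
  then have "eventually (\<lambda>m. \<not> dist (bond p N (r m) (a (r m))) (w N) < \<rho>) sequentially"
    by eventually_elim (use S w in \<open>simp add: a_def\<close>)
  moreover have "eventually (\<lambda>m. dist (bond p N (r m) (a (r m))) (w N) < \<rho>) sequentially"
    using lim[of N] assms by (rule tendstoD)
  ultimately have "eventually (\<lambda>m. False) sequentially"
    by eventually_elim simp
  then show False by simp
qed

lemma chain_to_near_threads:
  assumes "x \<in> Xlim" "y \<in> Xlim" "\<And>M \<epsilon>. \<epsilon> > 0 \<Longrightarrow> chain_to dist (X M) (f M) \<epsilon> (x M) (y M)"
    and "\<rho> > 0" "\<eta> > 0"
  shows "chain_to dist {a \<in> X N. \<exists>e\<in>Xlim. dist a (e N) < \<rho>} (f N) \<eta> (x N) (y N)"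
proof -
  obtain M where "N \<le> M" and near: "\<forall>s\<in>X M. \<exists>e\<in>Xlim. dist (bond p N M s) (e N) < \<rho>"
    using bond_image_near_threads[OF assms(4)] by blast
  have "chain_to dist {a \<in> X N. \<exists>e\<in>Xlim. dist a (e N) < \<rho>} (f N) \<eta>
      (bond p N M (x M)) (bond p N M (y M))"
  proof (rule chain_to_image[where h = "bond p N M" and Y = "X M" and g = "f M"])
    show "uniformly_continuous_on (X M) (bond p N M)"
      using \<open>N \<le> M\<close> by (rule uniformly_continuous_bond)
    show "bond p N M ` X M \<subseteq> {a \<in> X N. \<exists>e\<in>Xlim. dist a (e N) < \<rho>}"
      using near bond_in[of p X, OF p_maps \<open>N \<le> M\<close>] by auto
    show "f N (bond p N M s) = bond p N M (f M s)" if "s \<in> X M" for s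
      using bond_commute[OF f_p_commute p_maps \<open>N \<le> M\<close> that] .
  qed (use f_maps assms(3,5) in auto)
  then show ?thesis
    using bond_thread[OF assms(1) \<open>N \<le> M\<close>] bond_thread[OF assms(2) \<open>N \<le> M\<close>] by simp
qed

lemma thread_chain_at_level:
  assumes x: "x \<in> Xlim" and y: "y \<in> Xlim"
    and chains: "\<And>n \<epsilon>. \<epsilon> > 0 \<Longrightarrow> chain_to dist (X n) (f n) \<epsilon> (x n) (y n)" and "\<eta> > 0"
  shows "\<exists>k e. k > 0 \<and> e 0 = x \<and> e k = y \<and> (\<forall>i\<le>k. e i \<in> Xlim) \<and>
    (\<forall>i<k. dist (flim (e i) N) (e (Suc i) N) < \<eta>)"
proof -
  have "\<eta>/3 > 0" using \<open>\<eta> > 0\<close> by simp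
  then obtain \<rho> where "\<rho> > 0"
    and \<rho>: "\<forall>a\<in>X N. \<forall>b\<in>X N. dist b a < \<rho> \<longrightarrow> dist (f N b) (f N a) < \<eta>/3"
    using compact_uniformly_continuous[OF continuous_f compact_X]
    unfolding uniformly_continuous_on_def by blast
  obtain k t where k: "k > 0" "t 0 = x N" "t k = y N"
    and near: "\<forall>i\<le>k. t i \<in> X N \<and> (\<exists>e\<in>Xlim. dist (t i) (e N) < min \<rho> (\<eta>/3))"
    and step: "\<forall>i<k. dist (f N (t i)) (t (Suc i)) \<le> \<eta>/3"
    using chain_to_near_threads[OF x y chains, of "min \<rho> (\<eta>/3)" "\<eta>/3" N] \<open>\<rho> > 0\<close> \<open>\<eta> > 0\<close>
    unfolding chain_to_def by auto
  have "\<forall>i\<in>{..k}. \<exists>e. e \<in> Xlim \<and> dist (t i) (e N) < min \<rho> (\<eta>/3)" using near by auto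
  then obtain E where E: "\<forall>i\<in>{..k}. E i \<in> Xlim \<and> dist (t i) (E i N) < min \<rho> (\<eta>/3)"
    by (auto dest!: bchoice)
  define e where "e i = (if i = 0 then x else if i = k then y else E i)" for i
  have e: "e i \<in> Xlim" "dist (t i) (e i N) < min \<rho> (\<eta>/3)" if "i \<le> k" for i
    using that x y E k \<open>\<rho> > 0\<close> \<open>\<eta> > 0\<close> by (auto simp: e_def)
  have "dist (flim (e i) N) (e (Suc i) N) < \<eta>" if "i < k" for i
  proof -
    have "t i \<in> X N" "e i N \<in> X N" using near e(1) that by (auto simp: inv_limit_def)
    then have "dist (f N (e i N)) (f N (t i)) < \<eta>/3"
      using \<rho> e(2)[of i] that by (simp add: dist_commute)
    moreover have "dist (f N (t i)) (t (Suc i)) \<le> \<eta>/3" using step that by blast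
    moreover have "dist (t (Suc i)) (e (Suc i) N) < \<eta>/3" using e(2)[of "Suc i"] that by simp
    moreover have
      "dist (f N (e i N)) (e (Suc i) N) \<le> dist (f N (e i N)) (f N (t i)) + dist (f N (t i)) (e (Suc i) N)"
      "dist (f N (t i)) (e (Suc i) N) \<le> dist (f N (t i)) (t (Suc i)) + dist (t (Suc i)) (e (Suc i) N)"
      by (rule dist_triangle)+
    ultimately show ?thesis by (simp add: induced_map_def)
  qed
  moreover have "e 0 = x" "e k = y" using k(1) by (simp_all add: e_def)
  ultimately show ?thesis using k(1) e(1) by blast
qed

lemma chain_to_of_coordinates:
  assumes x: "x \<in> Xlim" and y: "y \<in> Xlim"
    and chains: "\<And>n \<epsilon>. \<epsilon> > 0 \<Longrightarrow> chain_to dist (X n) (f n) \<epsilon> (x n) (y n)" and "\<delta> > 0"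
  shows "chain_to prod_dist Xlim flim \<delta> x y"
proof -
  obtain N \<eta> where "\<eta> > 0"
    and close: "\<forall>u\<in>Xlim. \<forall>v\<in>Xlim. dist (u N) (v N) < \<eta> \<longrightarrow> prod_dist u v < \<delta>"
    using prod_dist_lt_if_level_close[OF \<open>\<delta> > 0\<close>] by blast
  obtain k e where k: "k > 0" "e 0 = x" "e k = y" and e: "\<forall>i\<le>k. e i \<in> Xlim"
    and steps: "\<forall>i<k. dist (flim (e i) N) (e (Suc i) N) < \<eta>"
    using thread_chain_at_level[OF x y chains \<open>\<eta> > 0\<close>, of N] by blast
  have "prod_dist (flim (e i)) (e (Suc i)) \<le> \<delta>" if "i < k" for i
    using close induced_map_in_inv_limit e steps that by (simp add: less_imp_le)
  then show ?thesis unfolding chain_to_def using k e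
    by (intro exI[of _ k] conjI exI[of _ e]) auto
qed

lemma chain_to_inv_limit_iff:
  assumes "x \<in> Xlim" "y \<in> Xlim"
  shows "(\<forall>\<delta>>0. chain_to prod_dist Xlim flim \<delta> x y) \<longleftrightarrow>
    (\<forall>n. \<forall>\<epsilon>>0. chain_to dist (X n) (f n) \<epsilon> (x n) (y n))"
proof
  show "\<forall>n. \<forall>\<epsilon>>0. chain_to dist (X n) (f n) \<epsilon> (x n) (y n)"
    if "\<forall>\<delta>>0. chain_to prod_dist Xlim flim \<delta> x y"
    using chain_to_coordinate[where X = X and p = p and f = f] that by blast
  show "\<forall>\<delta>>0. chain_to prod_dist Xlim flim \<delta> x y"
    if "\<forall>n. \<forall>\<epsilon>>0. chain_to dist (X n) (f n) \<epsilon> (x n) (y n)"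
    using chain_to_of_coordinates[OF assms] that by blast
qed

lemma chain_recurrent_inv_limit_iff:
  "x \<in> chain_recurrent prod_dist Xlim flim \<longleftrightarrow>
    x \<in> Xlim \<and> (\<forall>n. x n \<in> chain_recurrent dist (X n) (f n))"
proof (cases "x \<in> Xlim")
  case True
  then have "x n \<in> X n" for n by (simp add: inv_limit_def)
  with chain_to_inv_limit_iff[OF True True] True show ?thesis by (simp add: chain_recurrent_def)
qed (simp add: chain_recurrent_def)

lemma chain_equiv_inv_limit_iff:
  "chain_equiv prod_dist Xlim flim x y \<longleftrightarrow>
    x \<in> Xlim \<and> y \<in> Xlim \<and> (\<forall>n. chain_equiv dist (X n) (f n) (x n) (y n))"
proof (cases "x \<in> Xlim \<and> y \<in> Xlim")
  case True
  then show ?thesis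
    using chain_to_inv_limit_iff[of x y] chain_to_inv_limit_iff[of y x]
    unfolding chain_equiv_def chain_recurrent_inv_limit_iff by auto
qed (auto simp: chain_equiv_def chain_recurrent_inv_limit_iff)

lemma thread_set_chain_component:
  assumes "w \<in> chain_recurrent prod_dist Xlim flim"
  shows "thread_set X p (\<lambda>n. {z. chain_equiv dist (X n) (f n) (w n) z}) =
    {z. chain_equiv prod_dist Xlim flim w z}"
  using assms unfolding thread_set_def chain_equiv_inv_limit_iff chain_recurrent_inv_limit_iff
  by auto

lemma chain_components_compatible:
  assumes "w \<in> chain_recurrent prod_dist Xlim flim"
  shows "(\<lambda>n. {z. chain_equiv dist (X n) (f n) (w n) z}) \<in> compatible_components X f p"
proof -
  have w: "w \<in> Xlim" "\<And>n. w n \<in> chain_recurrent dist (X n) (f n)"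
    using assms chain_recurrent_inv_limit_iff by auto
  have "chain_equiv dist (X n) (f n) (w n) (p n b)"
    if "chain_equiv dist (X (Suc n)) (f (Suc n)) (w (Suc n)) b" for n b
  proof -
    have "chain_equiv dist (X n) (f n) (p n (w (Suc n))) (p n b)"
      using chain_equiv_image[OF compact_uniformly_continuous[OF continuous_p compact_X]
          p_maps f_maps f_p_commute that] .
    then show ?thesis using w(1) by (simp add: inv_limit_def)
  qed
  then show ?thesis
    unfolding compatible_components_def chain_components_def using w(2) by blast
qed

lemma compatible_components_at_thread:
  assumes "C \<in> compatible_components X f p" "w \<in> thread_set X p C"
  shows "C = (\<lambda>n. {z. chain_equiv dist (X n) (f n) (w n) z})"
    and "w \<in> chain_recurrent prod_dist Xlim flim"
proof -
  have C: "C n \<in> chain_components dist (X n) (f n)" "w n \<in> C n" for n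
    using assms unfolding compatible_components_def thread_set_def by auto
  show "C = (\<lambda>n. {z. chain_equiv dist (X n) (f n) (w n) z})"
    by (rule ext) (rule chain_component_eq[OF C])
  show "w \<in> chain_recurrent prod_dist Xlim flim"
    using chain_components_subset[OF C(1)] C(2) assms(2) chain_recurrent_inv_limit_iff
    unfolding thread_set_def by blast
qed

lemma thread_set_nonempty:
  assumes "C \<in> compatible_components X f p"
  obtains w where "w \<in> thread_set X p C"
proof -
  have comp: "C n \<in> chain_components dist (X n) (f n)" and maps: "p n ` C (Suc n) \<subseteq> C n" for n
    using assms unfolding compatible_components_def by auto
  have sub: "C n \<subseteq> X n" for n
    using chain_components_subset[OF comp] unfolding chain_recurrent_def by blast
  have "compact (X n \<inter> C n)" for n
    using compact_X closed_chain_component[OF compact_imp_closed[OF compact_X] continuous_f comp]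
    by (rule compact_Int_closed)
  then have compact: "compact (C n)" for n using sub by (simp add: Int_absorb1)
  have cont: "continuous_on (C (Suc n)) (p n)" for n
    using continuous_on_subset[OF continuous_p sub] .
  define a where "a m = (SOME c. c \<in> C m)" for m
  have a: "a m \<in> C m" for m using chain_components_nonempty[OF comp] by (simp add: a_def some_in_eq)
  obtain r w where "strict_mono r" "w \<in> inv_limit C p"
    "\<And>j. (\<lambda>m. bond p j (r m) (a (r m))) \<longlonglongrightarrow> w j"
    using inv_limit_limit_of_bonds[of C p a, OF compact cont maps a] by blast
  then have "w \<in> thread_set X p C" using sub unfolding inv_limit_def thread_set_def by auto
  then show ?thesis by (rule that)
qed

end

theorem lemma3p2:
  fixes X :: "nat \<Rightarrow> 'a::metric_space set"
    and f p :: "nat \<Rightarrow> 'a \<Rightarrow> 'a"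
  assumes "\<And>n. compact (X n)"
    and "\<And>n. continuous_on (X n) (f n)"
    and "\<And>n. f n ` X n \<subseteq> X n"
    and "\<And>n. continuous_on (X (Suc n)) (p n)"
    and "\<And>n. p n ` X (Suc n) \<subseteq> X n"
    and "\<And>n x. x \<in> X (Suc n) \<Longrightarrow> f n (p n x) = p n (f (Suc n) x)"
  shows "chain_components prod_dist (inv_limit X p) (induced_map f) =
         {thread_set X p C | C. C \<in> compatible_components X f p}"
proof -
  interpret equivariant_inverse_sequence X f p
    by unfold_locales (fact assms)+
  show ?thesis
  proof (intro equalityI subsetI)
    fix K assume "K \<in> chain_components prod_dist Xlim flim"
    then obtain w where "w \<in> chain_recurrent prod_dist Xlim flim"
      and "K = {z. chain_equiv prod_dist Xlim flim w z}"
      unfolding chain_components_def by blast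
    then show "K \<in> {thread_set X p C | C. C \<in> compatible_components X f p}"
      using thread_set_chain_component chain_components_compatible by blast
  next
    fix K assume "K \<in> {thread_set X p C | C. C \<in> compatible_components X f p}"
    then obtain C where C: "C \<in> compatible_components X f p" and K: "K = thread_set X p C"
      by blast
    obtain w where "w \<in> thread_set X p C" using thread_set_nonempty[OF C] .
    then have "C = (\<lambda>n. {z. chain_equiv dist (X n) (f n) (w n) z})"
      and w: "w \<in> chain_recurrent prod_dist Xlim flim"
      using compatible_components_at_thread[OF C] by auto
    then have "K = {z. chain_equiv prod_dist Xlim flim w z}"
      using K thread_set_chain_component by simp
    then show "K \<in> chain_components prod_dist Xlim flim"
      unfolding chain_components_def using w by blast
  qed
qed

end
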